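(* Let $(v_n)$ be a uniformly bounded sequence of weakly increasing functions $v_n:\mathbb{R}\to u([\underline w,\infty))$ such that, for every $n$, $\mathbb{E}_{a^*}[v_n(L_n)]-c(a^* )\ge\mathbb{E}_{\hat a}[v_n(L_n)]-c(\hat a)$. Then $\mathrm{Var}_{a^*}[v_n(L_n)]\ge\exp[-\mathrm{KL}(\mu_{\hat a},\mu_{a^*})n+o(n)]$, i.e. $\liminf_{n\to\infty}\frac1n\log\mathrm{Var}_{a^*}[v_n(L_n)]\ge-\mathrm{KL}(\mu_{\hat a},\mu_{a^*})$.
   Context: Two actions $a^*\neq\hat a$ with costs $c(\hat a)<c(a^* )$, and Borel probability measures $\mu_{a^*}\neq\mu_{\hat a}$ on a signal space $X$ (subset of a Euclidean space), mutually absolutely continuous, with $\int(\frac{d\mu_{a'}}{d\mu_a})^\lambda d\mu_a<\infty$ for all $\lambda>0$, $a,a'\in\{a^*,\hat a\}$. Under action $a$, $x_1,\dots,x_n$ are i.i.d. from $\mu_a$ with expectation and variance $\mathbb{E}_a,\mathrm{Var}_a$. $L_n:=\frac1n\sum_{i=1}^n\log\frac{d\mu_{a^*}}{d\mu_{\hat a}}(x_i)$. $u:[\underline w,\infty)\to\mathbb{R}$ is the agent's (strictly increasing) utility. $\mathrm{KL}(\nu,\nu')=\int\log\frac{d\nu}{d\nu'}d\nu$. *)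

theory Defs
  imports "HOL-Probability.Probability"
begin

text \<open>Log-likelihood ratio log (d mu_star / d mu_hat)(x); RN_deriv M N is the density dN/dM.\<close>
definition llr :: "'a measure \<Rightarrow> 'a measure \<Rightarrow> 'a \<Rightarrow> real" where
  "llr Mstar Mhat x = ln (enn2real (RN_deriv Mhat Mstar x))"

definition Ln :: "'a measure \<Rightarrow> 'a measure \<Rightarrow> nat \<Rightarrow> (nat \<Rightarrow> 'a) \<Rightarrow> real" where
  "Ln Mstar Mhat n xs = (\<Sum>i<n. llr Mstar Mhat (xs i)) / real n"

definition sample :: "nat \<Rightarrow> 'a measure \<Rightarrow> (nat \<Rightarrow> 'a) measure" where
  "sample n M = PiM {..<n} (\<lambda>_. M)"

definition var :: "'b measure \<Rightarrow> ('b \<Rightarrow> real) \<Rightarrow> real" where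
  "var M f = (\<integral>x. (f x - (\<integral>y. f y \<partial>M))\<^sup>2 \<partial>M)"

end

theory Submission
  imports Defs
begin

(*
  Let Y = ln (d mu_hat / d mu_star) and Lambda_n = Y(x_1) + ... + Y(x_n), so that the n-fold product
  of mu_star has density exp (- Lambda_n) with respect to that of mu_hat. Incentive compatibility
  says that f = v_n(L_n) satisfies E_star f - E_hat f >= Delta = c(a_star) - c(a_hat) > 0. With
  g = f - E_star f we get Delta <= E_hat |g|. Where Lambda_n < a, AM-GM bounds |g| by
  t/2 exp (- Lambda_n) g^2 + exp a / (2 t), whose E_hat-mean is t/2 Var_star f + exp a / (2 t);
  the event Lambda_n >= a contributes at most 2 B P_hat (Lambda_n >= a). Since
  E_hat exp (theta Y) = 1 + theta KL + O(theta^2), a Chernoff bound with a small exponent theta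
  makes this tail exponentially small for a = n (KL + eps/2), and optimising t gives
  Var_star f >= Delta^2/4 exp (- a).
*)

lemma exp_upper_Taylor_quadratic: "exp (x::real) \<le> 1 + x + x\<^sup>2 * exp \<bar>x\<bar> / 2"
proof -
  obtain t where t: "\<bar>t\<bar> \<le> \<bar>x\<bar>" and eq: "exp x = (\<Sum>m<2. x ^ m / fact m) + exp t / fact 2 * x ^ 2"
    using Maclaurin_exp_le[of x 2] by blast
  have "exp t * x\<^sup>2 \<le> exp \<bar>x\<bar> * x\<^sup>2"
    using t by (intro mult_right_mono) (auto simp: abs_le_iff)
  then show ?thesis
    unfolding eq by (simp add: numeral_2_eq_2 field_simps)
qed

lemma power2_le_exp_abs: "(y::real)\<^sup>2 \<le> 2 * exp \<bar>y\<bar>"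
  using exp_lower_Taylor_quadratic[of "\<bar>y\<bar>"] by simp

lemma exp_two_abs_ln_le:
  fixes s :: real
  assumes "0 < s"
  shows "exp (2 * \<bar>ln s\<bar>) \<le> s\<^sup>2 + (1 / s)\<^sup>2"
proof -
  have "exp \<bar>ln s\<bar> = s \<or> exp \<bar>ln s\<bar> = 1 / s"
    using assms by (cases "1 \<le> s") (auto simp: exp_minus inverse_eq_divide)
  then have "(exp \<bar>ln s\<bar>)\<^sup>2 \<le> s\<^sup>2 + (1 / s)\<^sup>2"
    by auto
  moreover have "exp (2 * \<bar>ln s\<bar>) = (exp \<bar>ln s\<bar>)\<^sup>2"
    using exp_of_nat_mult[of 2 "\<bar>ln s\<bar>"] by simp
  ultimately show ?thesis
    by simp
qed

lemma abs_le_weighted_square: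
  fixes z l a t C :: real
  assumes "t > 0" and "\<bar>z\<bar> \<le> C"
  shows "\<bar>z\<bar> \<le> t / 2 * (exp (- l) * z\<^sup>2) + exp a / (2 * t) + (if a \<le> l then C else 0)"
proof (cases "a \<le> l")
  case True
  have "0 \<le> t / 2 * (exp (- l) * z\<^sup>2)" "0 \<le> exp a / (2 * t)"
    using \<open>t > 0\<close> by simp_all
  then show ?thesis
    using True assms(2) by simp
next
  case False
  define p where "p = t * exp (- a)"
  have "p > 0"
    unfolding p_def using \<open>t > 0\<close> by simp
  have "\<bar>z\<bar> \<le> p / 2 * z\<^sup>2 + 1 / (2 * p)"
  proof -
    have "p / 2 * z\<^sup>2 + 1 / (2 * p) - \<bar>z\<bar> = (p * \<bar>z\<bar> - 1)\<^sup>2 / (2 * p)"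
      using \<open>p > 0\<close> by (simp add: field_simps power2_eq_square)
    moreover have "(p * \<bar>z\<bar> - 1)\<^sup>2 / (2 * p) \<ge> 0"
      using \<open>p > 0\<close> by simp
    ultimately show ?thesis
      by linarith
  qed
  also have "p / 2 * z\<^sup>2 \<le> t / 2 * (exp (- l) * z\<^sup>2)"
  proof -
    have "exp (- a) \<le> exp (- l)"
      using False by simp
    then have "t * exp (- a) * z\<^sup>2 \<le> t * exp (- l) * z\<^sup>2"
      using \<open>t > 0\<close> by (intro mult_left_mono mult_right_mono) auto
    then show ?thesis
      unfolding p_def by simp
  qed
  also have "1 / (2 * p) = exp a / (2 * t)"
    unfolding p_def by (simp add: exp_minus field_simps)
  finally show ?thesis
    using False by simp
qed

lemma ennreal_mult_eq_1D:
  fixes a b :: ennreal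
  assumes "a * b = 1"
  shows "0 < enn2real b" and "a = ennreal (1 / enn2real b)"
proof -
  obtain x y where xy: "a = ennreal x" "b = ennreal y" "0 \<le> x" "0 \<le> y"
    using assms by (cases a rule: ennreal_cases; cases b rule: ennreal_cases)
      (auto simp: ennreal_mult_top ennreal_top_mult split: if_splits)
  then have "x * y = 1"
    using assms by (metis ennreal_1 ennreal_inj ennreal_mult mult_nonneg_nonneg zero_le_one)
  then have "y \<noteq> 0"
    by auto
  with \<open>x * y = 1\<close> show "0 < enn2real b" and "a = ennreal (1 / enn2real b)"
    using xy by (auto simp: field_simps)
qed

lemma borel_measurable_RN_deriv_sets_eq:
  "sets N = sets M \<Longrightarrow> RN_deriv N M \<in> borel_measurable M"
  using borel_measurable_RN_deriv[of N M] measurable_cong_sets[of N M borel borel] by simp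

lemma AE_RN_deriv_mult_RN_deriv:
  assumes "sigma_finite_measure M" and "sigma_finite_measure N"
    and MN: "absolutely_continuous M N" and NM: "absolutely_continuous N M" and sets: "sets N = sets M"
  shows "AE x in M. RN_deriv M N x * RN_deriv N M x = 1"
proof -
  interpret M: sigma_finite_measure M by fact
  interpret N: sigma_finite_measure N by fact
  note borel_measurable_RN_deriv_sets_eq[OF sets, measurable]
  have "density M (\<lambda>x. RN_deriv M N x * RN_deriv N M x) = density (density M (RN_deriv M N)) (RN_deriv N M)"
    by (simp add: density_density_eq)
  also have "\<dots> = M"
    using M.density_RN_deriv[OF MN sets] N.density_RN_deriv[OF NM sets[symmetric]] by simp
  finally have eq: "density M (\<lambda>x. RN_deriv M N x * RN_deriv N M x) = M" .
  then have "density M (\<lambda>x. RN_deriv M N x * RN_deriv N M x) = density M (\<lambda>_. 1)"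
    by (simp add: density_1)
  then show ?thesis
    using eq by (subst (asm) sigma_finite_density_unique) (simp_all add: M.sigma_finite_measure_axioms)
qed

lemma eq_density_exp_neg_ln_RN_deriv:
  assumes "sigma_finite_measure M" and "sigma_finite_measure N"
    and MN: "absolutely_continuous M N" and NM: "absolutely_continuous N M" and sets: "sets N = sets M"
  shows "N = density M (\<lambda>x. exp (- ln (enn2real (RN_deriv N M x))))"
proof -
  interpret M: sigma_finite_measure M by fact
  note borel_measurable_RN_deriv_sets_eq[OF sets, measurable]
  have "N = density M (RN_deriv M N)"
    using M.density_RN_deriv[OF MN sets] by simp
  also have "\<dots> = density M (\<lambda>x. exp (- ln (enn2real (RN_deriv N M x))))"
  proof (rule density_cong)
    show "AE x in M. RN_deriv M N x = ennreal (exp (- ln (enn2real (RN_deriv N M x))))"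
      using AE_RN_deriv_mult_RN_deriv[OF assms]
    proof eventually_elim
      case (elim x)
      then show ?case
        using ennreal_mult_eq_1D[OF elim] by (simp add: exp_minus inverse_eq_divide)
    qed
  qed simp_all
  finally show ?thesis .
qed

lemma integrable_exp_two_abs_ln_RN_deriv:
  assumes "prob_space M" and "prob_space N"
    and MN: "absolutely_continuous M N" and NM: "absolutely_continuous N M" and sets: "sets N = sets M"
    and moment_M: "(\<integral>\<^sup>+x. ennreal (enn2real (RN_deriv M N x) powr 2) \<partial>M) < \<infinity>"
    and moment_N: "(\<integral>\<^sup>+x. ennreal (enn2real (RN_deriv N M x) powr 3) \<partial>N) < \<infinity>"
  shows "integrable M (\<lambda>x. exp (2 * \<bar>ln (enn2real (RN_deriv N M x))\<bar>))"
proof -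
  interpret M: prob_space M by fact
  interpret N: prob_space N by fact
  note borel_measurable_RN_deriv_sets_eq[OF sets, measurable]
  define s where "s x = enn2real (RN_deriv N M x)" for x
  define r where "r x = enn2real (RN_deriv M N x)" for x
  have [measurable]: "s \<in> borel_measurable M" "s \<in> borel_measurable N" "r \<in> borel_measurable M"
    unfolding s_def r_def by measurable
  have int_r: "integrable M (\<lambda>x. (r x)\<^sup>2)"
    using moment_M by (intro integrableI_bounded) (simp_all add: r_def)
  have "integrable N (\<lambda>x. s x ^ 3)"
    using moment_N by (intro integrableI_bounded) (simp_all add: s_def)
  then have int_s: "integrable M (\<lambda>x. (s x)\<^sup>2)"
    using N.RN_deriv_integrable[OF M.sigma_finite_measure_axioms NM sets[symmetric], of "\<lambda>x. (s x)\<^sup>2"]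
    by (simp add: s_def[symmetric] power2_eq_square power3_eq_cube mult.assoc)
  have "AE x in M. 0 < s x \<and> r x = 1 / s x"
    using AE_RN_deriv_mult_RN_deriv[OF M.sigma_finite_measure_axioms N.sigma_finite_measure_axioms MN NM sets]
    by eventually_elim (auto simp: s_def r_def dest: ennreal_mult_eq_1D)
  then have "AE x in M. norm (exp (2 * \<bar>ln (s x)\<bar>)) \<le> norm ((s x)\<^sup>2 + (r x)\<^sup>2)"
    by eventually_elim (simp add: exp_two_abs_ln_le)
  then show ?thesis
    unfolding s_def[symmetric]
    by (intro Bochner_Integration.integrable_bound[OF Bochner_Integration.integrable_add[OF int_s int_r]]) simp_all
qed

lemma PiM_density:
  fixes \<rho> :: "'a \<Rightarrow> ennreal"
  assumes "prob_space M" and "prob_space (density M \<rho>)"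
    and [measurable]: "\<rho> \<in> borel_measurable M" and "finite I"
  shows "PiM I (\<lambda>_. density M \<rho>) = density (PiM I (\<lambda>_. M)) (\<lambda>x. \<Prod>i\<in>I. \<rho> (x i))"
proof -
  interpret D: product_sigma_finite "\<lambda>_. density M \<rho>"
    using assms(2) by (simp add: product_sigma_finite_def prob_space_imp_sigma_finite)
  interpret M: product_sigma_finite "\<lambda>_. M"
    using assms(1) by (simp add: product_sigma_finite_def prob_space_imp_sigma_finite)
  show ?thesis
  proof (rule D.PiM_eqI[symmetric, OF \<open>finite I\<close>])
    show "sets (density (PiM I (\<lambda>_. M)) (\<lambda>x. \<Prod>i\<in>I. \<rho> (x i))) = sets (PiM I (\<lambda>_. density M \<rho>))"
      unfolding sets_density by (rule sets_PiM_cong) auto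
  next
    fix A
    assume "\<And>i. i \<in> I \<Longrightarrow> A i \<in> sets (density M \<rho>)"
    then have A: "\<And>i. i \<in> I \<Longrightarrow> A i \<in> sets M"
      by simp
    have indicator_PiE: "indicator (Pi\<^sub>E I A) x = (\<Prod>i\<in>I. indicator (A i) (x i) :: ennreal)"
      if "x \<in> space (PiM I (\<lambda>_. M))" for x
    proof (cases "x \<in> Pi\<^sub>E I A")
      case True
      then have "(\<Prod>i\<in>I. indicator (A i) (x i) :: ennreal) = 1"
        by (intro prod.neutral) (auto simp: PiE_iff)
      then show ?thesis
        using True by simp
    next
      case False
      moreover have "x \<in> extensional I"
        using that by (simp add: space_PiM PiE_def)
      ultimately obtain j where "j \<in> I" "x j \<notin> A j"
        by (auto simp: PiE_def Pi_def)
      then show ?thesis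
        using False \<open>finite I\<close> by (simp add: prod_zero bexI[of _ j])
    qed
    have "emeasure (density (PiM I (\<lambda>_. M)) (\<lambda>x. \<Prod>i\<in>I. \<rho> (x i))) (Pi\<^sub>E I A)
        = (\<integral>\<^sup>+x. (\<Prod>i\<in>I. \<rho> (x i)) * indicator (Pi\<^sub>E I A) x \<partial>PiM I (\<lambda>_. M))"
      using A \<open>finite I\<close> by (simp add: emeasure_density sets_PiM_I_finite)
    also have "\<dots> = (\<integral>\<^sup>+x. (\<Prod>i\<in>I. \<rho> (x i) * indicator (A i) (x i)) \<partial>PiM I (\<lambda>_. M))"
      by (intro nn_integral_cong) (simp add: indicator_PiE prod.distrib)
    also have "\<dots> = (\<Prod>i\<in>I. \<integral>\<^sup>+y. \<rho> y * indicator (A i) y \<partial>M)"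
      using A \<open>finite I\<close> by (intro M.product_nn_integral_prod) auto
    also have "\<dots> = (\<Prod>i\<in>I. emeasure (density M \<rho>) (A i))"
      using A by (intro prod.cong refl) (simp add: emeasure_density)
    finally show "emeasure (density (PiM I (\<lambda>_. M)) (\<lambda>x. \<Prod>i\<in>I. \<rho> (x i))) (Pi\<^sub>E I A)
        = (\<Prod>i\<in>I. emeasure (density M \<rho>) (A i))" .
  qed
qed

lemma PiM_Chernoff_sum_ge:
  fixes Y :: "'a \<Rightarrow> real"
  assumes "prob_space M" and [measurable]: "Y \<in> borel_measurable M" and "\<theta> > 0"
    and int: "integrable M (\<lambda>x. exp (\<theta> * Y x))" and "finite I"
  shows "measure (PiM I (\<lambda>_. M)) {xs \<in> space (PiM I (\<lambda>_. M)). real (card I) * c \<le> (\<Sum>i\<in>I. Y (xs i))}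
           \<le> ((\<integral>x. exp (\<theta> * Y x) \<partial>M) / exp (\<theta> * c)) ^ card I"
proof -
  interpret product_sigma_finite "\<lambda>_. M"
    using \<open>prob_space M\<close> by (simp add: product_sigma_finite_def prob_space_imp_sigma_finite)
  let ?P = "PiM I (\<lambda>_. M)"
  let ?Z = "\<lambda>xs. \<Prod>i\<in>I. exp (\<theta> * Y (xs i))"
  have Z_eq: "?Z xs = exp (\<theta> * (\<Sum>i\<in>I. Y (xs i)))" for xs
    using \<open>finite I\<close> by (simp add: exp_sum sum_distrib_left)
  have "{xs \<in> space ?P. real (card I) * c \<le> (\<Sum>i\<in>I. Y (xs i))}
      = {xs \<in> space ?P. exp (\<theta> * (real (card I) * c)) \<le> ?Z xs}"
    using \<open>\<theta> > 0\<close> by (simp add: Z_eq)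
  also have "measure ?P \<dots> \<le> (\<integral>xs. ?Z xs \<partial>?P) / exp (\<theta> * (real (card I) * c))"
    using int \<open>finite I\<close>
    by (intro integral_Markov_inequality_measure[where A = "space ?P"] product_integrable_prod AE_I2)
      (auto intro: prod_nonneg)
  also have "(\<integral>xs. ?Z xs \<partial>?P) = (\<integral>x. exp (\<theta> * Y x) \<partial>M) ^ card I"
    using int \<open>finite I\<close> by (subst product_integral_prod) auto
  also have "exp (\<theta> * (real (card I) * c)) = exp (\<theta> * c) ^ card I"
    by (simp add: exp_of_nat_mult[symmetric] ac_simps)
  finally show ?thesis
    by (simp add: power_divide)
qed

lemma exists_exp_moment_less_exp_mean:
  fixes Y :: "'a \<Rightarrow> real"
  assumes "prob_space M" and [measurable]: "Y \<in> borel_measurable M"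
    and int_exp: "integrable M (\<lambda>x. exp (2 * \<bar>Y x\<bar>))" and "\<epsilon> > 0"
  shows "\<exists>\<theta>>0. \<theta> \<le> 1 \<and> integrable M (\<lambda>x. exp (\<theta> * Y x)) \<and>
           (\<integral>x. exp (\<theta> * Y x) \<partial>M) < exp (\<theta> * ((\<integral>x. Y x \<partial>M) + \<epsilon>))"
proof -
  interpret prob_space M by fact
  have dominated: "integrable M g" if [measurable]: "g \<in> borel_measurable M"
    and "\<And>x. \<bar>g x\<bar> \<le> exp (2 * \<bar>Y x\<bar>)" for g
    using that by (intro Bochner_Integration.integrable_bound[OF int_exp]) auto
  define h where "h x = (Y x)\<^sup>2 * exp \<bar>Y x\<bar> / 2" for x
  have [measurable]: "h \<in> borel_measurable M"
    unfolding h_def by measurable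
  have "\<bar>Y x\<bar> \<le> exp (2 * \<bar>Y x\<bar>)" for x
    using exp_ge_add_one_self[of "2 * \<bar>Y x\<bar>"] by linarith
  then have int_Y: "integrable M Y"
    by (intro dominated) auto
  have "h x \<le> exp \<bar>Y x\<bar> * exp \<bar>Y x\<bar>" for x
    unfolding h_def using power2_le_exp_abs[of "Y x"] by (simp add: field_simps)
  then have int_h: "integrable M h"
    by (intro dominated) (auto simp: h_def mult_exp_exp)
  have int_exp_\<theta>: "integrable M (\<lambda>x. exp (\<theta> * Y x))" if "\<bar>\<theta>\<bar> \<le> 1" for \<theta>
  proof (rule dominated)
    show "\<bar>exp (\<theta> * Y x)\<bar> \<le> exp (2 * \<bar>Y x\<bar>)" for x
      using that mult_left_le_one_le[of "\<bar>Y x\<bar>" "\<bar>\<theta>\<bar>"] abs_ge_self[of "\<theta> * Y x"]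
      by (simp add: abs_mult)
  qed simp
  define K where "K = (\<integral>x. Y x \<partial>M)"
  define C where "C = (\<integral>x. h x \<partial>M)"
  have "C \<ge> 0"
    unfolding C_def h_def by simp
  define \<theta> where "\<theta> = min 1 (\<epsilon> / (C + 1))"
  have \<theta>: "0 < \<theta>" "\<theta> \<le> 1"
    unfolding \<theta>_def using \<open>C \<ge> 0\<close> \<open>\<epsilon> > 0\<close> by auto
  have "\<theta> * C < \<epsilon>"
  proof -
    have "\<theta> * C \<le> \<epsilon> / (C + 1) * C"
      unfolding \<theta>_def using \<open>C \<ge> 0\<close> by (intro mult_right_mono) auto
    also have "\<dots> < \<epsilon>"
      using \<open>C \<ge> 0\<close> \<open>\<epsilon> > 0\<close> by (simp add: field_simps)
    finally show ?thesis .
  qed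
  have "exp (\<theta> * Y x) \<le> 1 + \<theta> * Y x + \<theta>\<^sup>2 * h x" for x
  proof -
    have "exp \<bar>\<theta> * Y x\<bar> \<le> exp \<bar>Y x\<bar>"
      using \<theta> mult_left_le_one_le[of "\<bar>Y x\<bar>" \<theta>] by (simp add: abs_mult)
    then have "(\<theta> * Y x)\<^sup>2 * exp \<bar>\<theta> * Y x\<bar> \<le> (\<theta> * Y x)\<^sup>2 * exp \<bar>Y x\<bar>"
      by (intro mult_left_mono) auto
    then show ?thesis
      using exp_upper_Taylor_quadratic[of "\<theta> * Y x"] unfolding h_def by (simp add: power_mult_distrib)
  qed
  then have "(\<integral>x. exp (\<theta> * Y x) \<partial>M) \<le> (\<integral>x. 1 + \<theta> * Y x + \<theta>\<^sup>2 * h x \<partial>M)"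
    using \<theta> int_exp_\<theta> int_Y int_h by (intro integral_mono) auto
  also have "\<dots> = 1 + \<theta> * K + \<theta> * (\<theta> * C)"
    unfolding K_def C_def using int_Y int_h by (simp add: prob_space power2_eq_square)
  also have "\<dots> < 1 + \<theta> * (K + \<epsilon>)"
    using \<theta> \<open>\<theta> * C < \<epsilon>\<close> by (simp add: distrib_left)
  also have "\<dots> \<le> exp (\<theta> * (K + \<epsilon>))"
    by (rule exp_ge_add_one_self)
  finally show ?thesis
    using \<theta> int_exp_\<theta>[of \<theta>] unfolding K_def by auto
qed

lemma mean_difference_le_variance_density:
  fixes \<Lambda> f :: "'b \<Rightarrow> real"
  assumes "prob_space P0" and "prob_space P1" and P1: "P1 = density P0 (\<lambda>x. exp (- \<Lambda> x))"
    and [measurable]: "\<Lambda> \<in> borel_measurable P0" "f \<in> borel_measurable P0"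
    and f_bound: "\<And>x. \<bar>f x\<bar> \<le> B" and "t > 0"
  shows "(\<integral>x. f x \<partial>P1) - (\<integral>x. f x \<partial>P0)
           \<le> t / 2 * var P1 f + exp a / (2 * t) + 2 * B * measure P0 {x \<in> space P0. a \<le> \<Lambda> x}"
proof -
  interpret P0: prob_space P0 by fact
  interpret P1: prob_space P1 by fact
  have measurable_P1 [simp]: "measurable P1 N = measurable P0 N" for N :: "'c measure"
    by (rule measurable_cong_sets) (simp_all add: P1)
  define m where "m = (\<integral>x. f x \<partial>P1)"
  define g where "g x = f x - m" for x
  have [measurable]: "g \<in> borel_measurable P0"
    unfolding g_def by measurable
  have "\<bar>m\<bar> \<le> B"
    unfolding m_def using f_bound
    by (intro P1.integral_le_const[THEN order_trans[OF integral_abs_bound]] P1.integrable_const_bound) auto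
  then have g_bound: "\<bar>g x\<bar> \<le> 2 * B" for x
    unfolding g_def using f_bound[of x] by linarith
  have int_f: "integrable P0 f"
    using f_bound by (intro P0.integrable_const_bound[where B = B]) auto
  have int_g: "integrable P0 g"
    using g_bound by (intro P0.integrable_const_bound[where B = "2 * B"]) auto
  have "(g x)\<^sup>2 \<le> (2 * B)\<^sup>2" for x
    using power_mono[OF g_bound abs_ge_zero, of x 2] by simp
  then have "integrable P1 (\<lambda>x. (g x)\<^sup>2)"
    by (intro P1.integrable_const_bound[where B = "(2 * B)\<^sup>2"]) auto
  then have int_weighted: "integrable P0 (\<lambda>x. exp (- \<Lambda> x) * (g x)\<^sup>2)"
    unfolding P1 by (subst (asm) integrable_density) auto
  have var_eq: "var P1 f = (\<integral>x. exp (- \<Lambda> x) * (g x)\<^sup>2 \<partial>P0)"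
    unfolding var_def P1 by (subst integral_density) (auto simp: g_def m_def P1)
  let ?A = "{x \<in> space P0. a \<le> \<Lambda> x}"
  have "?A \<in> sets P0"
    by measurable
  then have int_indicator: "integrable P0 (indicator ?A :: _ \<Rightarrow> real)"
    by (simp add: integrable_indicator_iff P0.emeasure_eq_measure)
  have int_bound: "integrable P0 (\<lambda>x. t / 2 * (exp (- \<Lambda> x) * (g x)\<^sup>2) + exp a / (2 * t) + 2 * B * indicator ?A x)"
    using int_weighted int_indicator by auto
  have "(\<integral>x. f x \<partial>P1) - (\<integral>x. f x \<partial>P0) = - (\<integral>x. g x \<partial>P0)"
    unfolding g_def m_def using int_f by (simp add: P0.prob_space)
  also have "\<dots> \<le> (\<integral>x. \<bar>g x\<bar> \<partial>P0)"
    using integral_abs_bound[of P0 g] by linarith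
  also have "\<dots> \<le> (\<integral>x. t / 2 * (exp (- \<Lambda> x) * (g x)\<^sup>2) + exp a / (2 * t) + 2 * B * indicator ?A x \<partial>P0)"
  proof (rule integral_mono[OF integrable_abs[OF int_g] int_bound])
    fix x
    show "\<bar>g x\<bar> \<le> t / 2 * (exp (- \<Lambda> x) * (g x)\<^sup>2) + exp a / (2 * t) + 2 * B * indicator ?A x"
      if "x \<in> space P0"
      using abs_le_weighted_square[OF \<open>t > 0\<close> g_bound[of x], where l = "\<Lambda> x" and a = a] that
      by (auto simp: indicator_def split: if_splits)
  qed
  also have "\<dots> = t / 2 * var P1 f + exp a / (2 * t) + 2 * B * measure P0 ?A"
    using int_weighted int_indicator by (simp add: var_eq P0.prob_space)
  finally show ?thesis .
qed

lemma variance_ge_of_mean_difference: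
  fixes \<Lambda> f :: "'b \<Rightarrow> real"
  assumes "prob_space P0" and "prob_space P1" and "P1 = density P0 (\<lambda>x. exp (- \<Lambda> x))"
    and "\<Lambda> \<in> borel_measurable P0" and "f \<in> borel_measurable P0" and "\<And>x. \<bar>f x\<bar> \<le> B"
    and "0 < \<Delta>" and gap: "\<Delta> \<le> (\<integral>x. f x \<partial>P1) - (\<integral>x. f x \<partial>P0)"
    and tail: "2 * B * measure P0 {x \<in> space P0. a \<le> \<Lambda> x} \<le> \<Delta> / 2"
  shows "\<Delta>\<^sup>2 / 4 * exp (- a) \<le> var P1 f"
proof -
  define t where "t = 2 * exp a / \<Delta>"
  have "t > 0"
    unfolding t_def using \<open>0 < \<Delta>\<close> by simp
  have "\<Delta> \<le> t / 2 * var P1 f + exp a / (2 * t) + \<Delta> / 2"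
    using gap tail mean_difference_le_variance_density[OF assms(1-6) \<open>t > 0\<close>, of a] by linarith
  also have "t / 2 * var P1 f + exp a / (2 * t) = exp a * var P1 f / \<Delta> + \<Delta> / 4"
    unfolding t_def using \<open>0 < \<Delta>\<close> by (simp add: field_simps)
  finally have "\<Delta> / 4 \<le> exp a * var P1 f / \<Delta>"
    by linarith
  then show ?thesis
    using \<open>0 < \<Delta>\<close> by (simp add: field_simps exp_minus power2_eq_square)
qed

lemma variance_PiM_ge_of_Chernoff_tail:
  fixes Y :: "'a \<Rightarrow> real" and f :: "(nat \<Rightarrow> 'a) \<Rightarrow> real"
  assumes "prob_space M" and "prob_space N" and N: "N = density M (\<lambda>x. exp (- Y x))"
    and [measurable]: "Y \<in> borel_measurable M"
    and "0 < \<theta>" and int_exp: "integrable M (\<lambda>x. exp (\<theta> * Y x))"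
    and f_meas: "f \<in> borel_measurable (PiM {..<n} (\<lambda>_. M))" and f_bound: "\<And>xs. \<bar>f xs\<bar> \<le> B"
    and "0 < \<Delta>"
    and gap: "\<Delta> \<le> (\<integral>xs. f xs \<partial>PiM {..<n} (\<lambda>_. N)) - (\<integral>xs. f xs \<partial>PiM {..<n} (\<lambda>_. M))"
    and tail: "2 * B * ((\<integral>x. exp (\<theta> * Y x) \<partial>M) / exp (\<theta> * c)) ^ n \<le> \<Delta> / 2"
  shows "\<Delta>\<^sup>2 / 4 * exp (- (real n * c)) \<le> var (PiM {..<n} (\<lambda>_. N)) f"
proof -
  let ?P0 = "PiM {..<n} (\<lambda>_. M)" and ?P1 = "PiM {..<n} (\<lambda>_. N)"
  define \<Lambda> where "\<Lambda> xs = (\<Sum>i<n. Y (xs i))" for xs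
  have [measurable]: "\<Lambda> \<in> borel_measurable ?P0"
    unfolding \<Lambda>_def by measurable
  have "?P1 = density ?P0 (\<lambda>xs. \<Prod>i<n. ennreal (exp (- Y (xs i))))"
    unfolding N using \<open>prob_space M\<close> \<open>prob_space N\<close> N by (intro PiM_density) auto
  also have "\<dots> = density ?P0 (\<lambda>xs. exp (- \<Lambda> xs))"
    by (simp add: \<Lambda>_def prod_ennreal exp_sum sum_negf[symmetric])
  finally have density: "?P1 = density ?P0 (\<lambda>xs. exp (- \<Lambda> xs))" .
  have "B \<ge> 0"
    using f_bound[of undefined] abs_ge_zero[of "f undefined"] by linarith
  have "measure ?P0 {xs \<in> space ?P0. real n * c \<le> \<Lambda> xs} \<le> ((\<integral>x. exp (\<theta> * Y x) \<partial>M) / exp (\<theta> * c)) ^ n"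
    using PiM_Chernoff_sum_ge[OF \<open>prob_space M\<close> _ \<open>0 < \<theta>\<close> int_exp, of "{..<n}" c]
    unfolding \<Lambda>_def by simp
  then have "2 * B * measure ?P0 {xs \<in> space ?P0. real n * c \<le> \<Lambda> xs} \<le> \<Delta> / 2"
    using tail \<open>B \<ge> 0\<close> by (meson mult_left_mono order_trans zero_le_mult_iff zero_le_numeral)
  then show ?thesis
    using \<open>prob_space M\<close> \<open>prob_space N\<close> f_meas f_bound \<open>0 < \<Delta>\<close> gap
    by (intro variance_ge_of_mean_difference[OF _ _ density]) (auto intro: prob_space_PiM)
qed

lemma eventually_variance_ge_exp_iid:
  fixes Y :: "'a \<Rightarrow> real" and f :: "nat \<Rightarrow> (nat \<Rightarrow> 'a) \<Rightarrow> real"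
  assumes "prob_space M" and "prob_space N" and "N = density M (\<lambda>x. exp (- Y x))"
    and [measurable]: "Y \<in> borel_measurable M"
    and int_exp: "integrable M (\<lambda>x. exp (2 * \<bar>Y x\<bar>))"
    and f_meas: "\<And>n. f n \<in> borel_measurable (PiM {..<n} (\<lambda>_. M))"
    and f_bound: "\<And>n xs. \<bar>f n xs\<bar> \<le> B"
    and "0 < \<Delta>"
    and gap: "\<And>n. \<Delta> \<le> (\<integral>xs. f n xs \<partial>PiM {..<n} (\<lambda>_. N))
                        - (\<integral>xs. f n xs \<partial>PiM {..<n} (\<lambda>_. M))"
    and "0 < \<epsilon>"
  shows "\<forall>\<^sub>F n in sequentially.
           exp (- ((\<integral>x. Y x \<partial>M) + \<epsilon>) * real n) \<le> var (PiM {..<n} (\<lambda>_. N)) (f n)"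
proof -
  define c where "c = (\<integral>x. Y x \<partial>M) + \<epsilon> / 2"
  obtain \<theta> where "0 < \<theta>" and int_exp_\<theta>: "integrable M (\<lambda>x. exp (\<theta> * Y x))"
    and less: "(\<integral>x. exp (\<theta> * Y x) \<partial>M) < exp (\<theta> * c)"
    using exists_exp_moment_less_exp_mean[OF \<open>prob_space M\<close> _ int_exp, of "\<epsilon> / 2"] \<open>0 < \<epsilon>\<close>
    unfolding c_def by auto
  define q where "q = (\<integral>x. exp (\<theta> * Y x) \<partial>M) / exp (\<theta> * c)"
  have "0 \<le> q" "q < 1"
    unfolding q_def using less by auto
  then have "(\<lambda>n. 2 * B * q ^ n) \<longlonglongrightarrow> 0"
    by (intro tendsto_mult_right_zero LIMSEQ_power_zero) auto
  then have "\<forall>\<^sub>F n in sequentially. 2 * B * q ^ n < \<Delta> / 2"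
    using \<open>0 < \<Delta>\<close> by (intro order_tendstoD(2)) auto
  moreover have "exp (- \<epsilon> / 2) ^ n = exp (- (\<epsilon> / 2) * real n)" for n
    by (simp add: exp_of_nat_mult[symmetric] ac_simps)
  then have "(\<lambda>n. exp (- (\<epsilon> / 2) * real n)) \<longlonglongrightarrow> 0"
    using \<open>0 < \<epsilon>\<close> LIMSEQ_power_zero[of "exp (- \<epsilon> / 2)"] by simp
  then have "\<forall>\<^sub>F n in sequentially. exp (- (\<epsilon> / 2) * real n) < \<Delta>\<^sup>2 / 4"
    using \<open>0 < \<Delta>\<close> by (intro order_tendstoD(2)) auto
  ultimately show ?thesis
  proof eventually_elim
    case (elim n)
    have "exp (- ((\<integral>x. Y x \<partial>M) + \<epsilon>) * real n) = exp (- (\<epsilon> / 2) * real n) * exp (- (real n * c))"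
      unfolding c_def by (simp add: mult_exp_exp algebra_simps)
    also have "\<dots> \<le> \<Delta>\<^sup>2 / 4 * exp (- (real n * c))"
      using elim(2) by (intro mult_right_mono) auto
    also have "\<dots> \<le> var (PiM {..<n} (\<lambda>_. N)) (f n)"
      using elim(1) \<open>0 < \<theta>\<close> int_exp_\<theta> f_meas f_bound \<open>0 < \<Delta>\<close> gap unfolding q_def
      by (intro variance_PiM_ge_of_Chernoff_tail[OF assms(1-4)]) auto
    finally show ?case .
  qed
qed

text \<open>Only measurability (a consequence of monotonicity) and boundedness of the \<open>v n\<close> are used.\<close>

theorem lemma3:
  fixes X :: "'a::euclidean_space set"
    and Mstar Mhat :: "'a measure"
    and cstar chat :: real
    and u :: "real \<Rightarrow> real" and w :: real
    and v :: "nat \<Rightarrow> real \<Rightarrow> real"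
  assumes costs: "chat < cstar"
    and P1: "prob_space Mstar" and P0: "prob_space Mhat"
    and S1: "sets Mstar = sets (restrict_space borel X)" and Sp1: "space Mstar = X"
    and S0: "sets Mhat = sets (restrict_space borel X)" and Sp0: "space Mhat = X"
    and neq: "Mstar \<noteq> Mhat"
    and ac1: "absolutely_continuous Mstar Mhat" and ac0: "absolutely_continuous Mhat Mstar"
    and mom1: "\<And>r::real. r > 0 \<Longrightarrow>
       (\<integral>\<^sup>+ x. ennreal (enn2real (RN_deriv Mhat Mstar x) powr r) \<partial>Mhat) < \<infinity>"
    and mom0: "\<And>r::real. r > 0 \<Longrightarrow>
       (\<integral>\<^sup>+ x. ennreal (enn2real (RN_deriv Mstar Mhat x) powr r) \<partial>Mstar) < \<infinity>"
    and u_mono: "strict_mono_on {w..} u"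
    and v_mono: "\<And>n. mono (v n)"
    and v_range: "\<And>n t. v n t \<in> u ` {w..}"
    and v_bdd: "\<exists>B. \<forall>n t. \<bar>v n t\<bar> \<le> B"
    and IC: "\<And>n. (\<integral>xs. v n (Ln Mstar Mhat n xs) \<partial>sample n Mstar) - cstar
                 \<ge> (\<integral>xs. v n (Ln Mstar Mhat n xs) \<partial>sample n Mhat) - chat"
  shows "\<forall>\<epsilon>>0. \<forall>\<^sub>F n in sequentially.
           var (sample n Mstar) (\<lambda>xs. v n (Ln Mstar Mhat n xs))
             \<ge> exp (- (KL_divergence (exp 1) Mstar Mhat + \<epsilon>) * real n)"
proof (intro allI impI)
  fix \<epsilon> :: real
  assume "0 < \<epsilon>"
  have sets: "sets Mstar = sets Mhat"
    using S1 S0 by simp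
  note sigma_finite = P0[THEN prob_space_imp_sigma_finite] P1[THEN prob_space_imp_sigma_finite]
  define Y where "Y x = ln (enn2real (RN_deriv Mstar Mhat x))" for x
  have density: "Mstar = density Mhat (\<lambda>x. exp (- Y x))"
    unfolding Y_def by (rule eq_density_exp_neg_ln_RN_deriv[OF sigma_finite ac0 ac1 sets])
  have Y_meas: "Y \<in> borel_measurable Mhat"
    unfolding Y_def using borel_measurable_RN_deriv_sets_eq[OF sets] by measurable
  have int_exp: "integrable Mhat (\<lambda>x. exp (2 * \<bar>Y x\<bar>))"
    unfolding Y_def using mom1[of 2] mom0[of 3]
    by (intro integrable_exp_two_abs_ln_RN_deriv[OF P0 P1 ac0 ac1 sets]) simp_all
  have f_meas: "(\<lambda>xs. v n (Ln Mstar Mhat n xs)) \<in> borel_measurable (PiM {..<n} (\<lambda>_. Mhat))" for n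
    using borel_measurable_mono[OF v_mono[of n]] unfolding Ln_def llr_def by measurable
  obtain B where v_bound: "\<And>n t. \<bar>v n t\<bar> \<le> B"
    using v_bdd by blast
  have gap: "cstar - chat \<le> (\<integral>xs. v n (Ln Mstar Mhat n xs) \<partial>PiM {..<n} (\<lambda>_. Mstar))
                           - (\<integral>xs. v n (Ln Mstar Mhat n xs) \<partial>PiM {..<n} (\<lambda>_. Mhat))" for n
    using IC[of n] unfolding sample_def by linarith
  have KL: "KL_divergence (exp 1) Mstar Mhat = (\<integral>x. Y x \<partial>Mhat)"
    unfolding KL_divergence_def entropy_density_def Y_def by (simp add: log_def o_def)
  show "\<forall>\<^sub>F n in sequentially. var (sample n Mstar) (\<lambda>xs. v n (Ln Mstar Mhat n xs))
      \<ge> exp (- (KL_divergence (exp 1) Mstar Mhat + \<epsilon>) * real n)"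
    unfolding sample_def KL
    using eventually_variance_ge_exp_iid[OF P0 P1 density Y_meas int_exp f_meas v_bound _ gap \<open>0 < \<epsilon>\<close>] costs
    by simp
qed

end
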